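(* Let $A$ be an abelian group of order $n$ whose $2$-Sylow subgroup is either non-cyclic or trivial. Then (a) $P_a\in\operatorname{SL}_n$ for every $a\in A$, and (b) $D_\chi\in\operatorname{SL}_n$ for every $\chi\in A^{\ast}$.
   Context: $k$ is an algebraically closed field of characteristic $0$, $A^{\ast}=\operatorname{Hom}(A,k^{\times})$ is the character group of $A$, and $V=k[A]$ is the group algebra of $A$, identified with $k^n$ via the basis $\{a : a\in A\}$, so $\operatorname{GL}(V)=\operatorname{GL}_n$. For $a\in A$, $P_a\in\operatorname{GL}(V)$ is defined by $P_a(\sum_{b\in A}c_b b)=\sum_{b\in A}c_b\, ab$; for $\chi\in A^{\ast}$, $D_\chi\in\operatorname{GL}(V)$ is defined by $D_\chi(\sum_{a\in A}c_a a)=\sum_{a\in A}c_a\chi(a)\,a$ ($c_a,c_b\in k$). *)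

theory Defs
  imports "HOL-Analysis.Analysis" "HOL-Algebra.Algebra" "HOL-Computational_Algebra.Polynomial"
begin

text \<open>The group A is a finite group structure G whose carrier is the whole finite type 'a,
  so V = k[A] = k^n with basis indexed by 'a, and GL(V) consists of matrices k^'a^'a.\<close>

definition perm_op :: "('a, 'm) monoid_scheme \<Rightarrow> 'a \<Rightarrow> ('k::comm_ring_1) ^ ('a::finite) ^ 'a" where
  "perm_op G a = (\<chi> i j. if i = a \<otimes>\<^bsub>G\<^esub> j then 1 else 0)"

definition diag_op :: "('a \<Rightarrow> 'k) \<Rightarrow> ('k::comm_ring_1) ^ ('a::finite) ^ 'a" where
  "diag_op c = (\<chi> i j. if i = j then c i else 0)"

definition character :: "('a, 'm) monoid_scheme \<Rightarrow> ('a \<Rightarrow> 'k::field) \<Rightarrow> bool" where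
  "character G c \<longleftrightarrow> (\<forall>x\<in>carrier G. c x \<noteq> 0) \<and>
     (\<forall>x\<in>carrier G. \<forall>y\<in>carrier G. c (x \<otimes>\<^bsub>G\<^esub> y) = c x * c y)"

definition sylow2 :: "('a, 'm) monoid_scheme \<Rightarrow> 'a set \<Rightarrow> bool" where
  "sylow2 G P \<longleftrightarrow> subgroup P G \<and> card P = 2 ^ multiplicity (2::nat) (order G)"

definition cyclic_subgroup :: "('a, 'm) monoid_scheme \<Rightarrow> 'a set \<Rightarrow> bool" where
  "cyclic_subgroup G P \<longleftrightarrow> (\<exists>g\<in>P. P = generate G {g})"

definition alg_closed :: "'k::field itself \<Rightarrow> bool" where
  "alg_closed _ \<longleftrightarrow> (\<forall>p::'k poly. Polynomial.degree p \<ge> 1 \<longrightarrow> (\<exists>x. Polynomial.poly p x = 0))"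

end

theory Submission
  imports Defs "HOL-Algebra.Sym_Groups"
begin

text \<open>
  Let n = |A|. The hypothesis on the 2-Sylow subgroup is used only through its consequence
  a^(n/2) = 1 for all a when n is even: otherwise ord a is divisible by the full 2-part 2^v
  of n, and a power of a generates a cyclic subgroup of order 2^v.

  Left translation by a decomposes A into n / ord a cycles of length ord a, so
  det P_a = (-1)^((n / ord a) (ord a - 1)), which is -1 exactly when n is even and
  a^(n/2) \<noteq> 1.

  For a character \<chi> with image H of order d and kernel of order m = n / d, every h \<in> H
  satisfies h^d = 1, so H is the set of all d-th roots of unity and
  det D_\<chi> = (\<Prod>H)^m = (-1)^((d + 1) m). If this is -1, then d is even and m is odd;
  since x^(d/2) = 1 has at most d/2 roots, some \<chi>(a) \<in> H has \<chi>(a)^(d/2) \<noteq> 1, and then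
  \<chi>(a^(n/2)) = \<chi>(a)^(d/2) \<noteq> 1.
\<close>

lemma least_power_restrict:
  assumes "(\<lambda>y. if y \<in> T then p y else y) permutes T" "x \<in> T"
  shows "least_power (\<lambda>y. if y \<in> T then p y else y) x = least_power p x"
    (is "least_power ?q x = _")
proof -
  have "(?q ^^ i) x = (p ^^ i) x" for i
  proof (induction i)
    case (Suc i)
    have "(?q ^^ i) x \<in> T"
      using permutes_in_image[OF permutes_funpow[OF assms(1)]] assms(2) by blast
    then show ?case using Suc by simp
  qed simp
  then show ?thesis unfolding least_power_def by simp
qed

lemma permutes_eq_restrict_comp_cycle:
  assumes "p permutes S" "finite S"
  shows "p = (\<lambda>y. if y \<in> S - set (support p s) then p y else y) \<circ> cycle_of_list (support p s)"
    (is "p = ?q \<circ> cycle_of_list ?cs")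
proof
  fix y
  have perm: "permutation p"
    using assms permutation_permutes by blast
  show "p y = (?q \<circ> cycle_of_list ?cs) y"
  proof (cases "y \<in> set ?cs")
    case True
    have "p y = cycle_of_list ?cs y"
      by (rule cycle_restrict[OF perm True])
    moreover have "cycle_of_list ?cs y \<in> set ?cs"
      using True by (simp only: permutes_in_image[OF cycle_permutes])
    ultimately show ?thesis by simp
  next
    case False
    then show ?thesis
      using permutes_not_in[OF assms(1)] by (auto simp: id_outside_supp)
  qed
qed

lemma swapidseq_ext_if_uniform_orbits:
  assumes "p permutes S" "finite S" "\<And>x. x \<in> S \<Longrightarrow> least_power p x = k"
  shows "swapidseq_ext S (card S div k * (k - 1)) p"
  using assms
proof (induction "card S" arbitrary: S p rule: less_induct)
  case less
  show ?case
  proof (cases "S = {}")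
    case True
    then show ?thesis using less.prems(1) swapidseq_ext.empty by (simp add: permutes_empty)
  next
    case False
    then obtain s where s: "s \<in> S" by blast
    have perm: "permutation p"
      using less.prems(1,2) permutation_permutes by blast
    define cs where "cs = support p s"
    define S' where "S' = S - set cs"
    define q where "q = (\<lambda>y. if y \<in> S' then p y else y)"
    have k: "least_power p s = k" "k > 0"
      using less.prems(3)[OF s] least_power_of_permutation(2)[OF perm] by auto
    have cycle: "cycle cs" and len: "length cs = k"
      unfolding cs_def using cycle_of_permutation[OF perm] k by auto
    have cs_sub: "set cs \<subseteq> S"
      unfolding cs_def using permutes_in_image[OF permutes_funpow[OF less.prems(1)]] s by auto
    have card_S: "card S = card S' + k"
      unfolding S'_def using cs_sub less.prems(2) len distinct_card[OF cycle]
      by (metis card_Diff_subset card_mono finite_subset le_add_diff_inverse2)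
    have q_perm: "q permutes S'"
      unfolding q_def S'_def cs_def by (rule semidecomposition[OF less.prems(1,2)])
    have "swapidseq_ext S' (card S' div k * (k - 1)) q"
    proof (rule less.hyps)
      show "card S' < card S" using card_S k by simp
      show "least_power q x = k" if "x \<in> S'" for x
        using least_power_restrict[OF q_perm[unfolded q_def] that] less.prems(3) that
        unfolding q_def S'_def by auto
    qed (use q_perm less.prems(2) S'_def in auto)
    then have "swapidseq_ext (S' \<union> set cs) (card S' div k * (k - 1) + (length cs - 1))
        (q \<circ> cycle_of_list cs)"
      using swapidseq_ext_extension swapidseq_ext_of_cycles[OF cycle] S'_def by blast
    moreover have "q \<circ> cycle_of_list cs = p"
      unfolding q_def S'_def cs_def using permutes_eq_restrict_comp_cycle[OF less.prems(1,2)] by simp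
    moreover have "S' \<union> set cs = S" using cs_sub S'_def by auto
    moreover have "card S div k * (k - 1) = card S' div k * (k - 1) + (length cs - 1)"
      using card_S k len by (simp add: algebra_simps)
    ultimately show ?thesis by simp
  qed
qed

lemma (in group) left_translation_permutes:
  assumes "c \<in> carrier G"
  shows "(\<lambda>y. if y \<in> carrier G then c \<otimes> y else y) permutes carrier G"
proof (rule bij_imp_permutes)
  show "bij_betw (\<lambda>y. if y \<in> carrier G then c \<otimes> y else y) (carrier G) (carrier G)"
    by (rule bij_betwI[where g = "\<lambda>y. inv c \<otimes> y"]) (use assms in \<open>auto simp: m_assoc [symmetric]\<close>)
qed simp

lemma (in group) least_power_left_translation:
  assumes "finite (carrier G)" "c \<in> carrier G" "x \<in> carrier G"
  shows "least_power (\<lambda>y. if y \<in> carrier G then c \<otimes> y else y) x = ord c"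
    (is "least_power ?p x = _")
proof -
  have pow: "(?p ^^ i) x = c [^] i \<otimes> x" for i
  proof (induction i)
    case (Suc i)
    have "(?p ^^ Suc i) x = c \<otimes> (c [^] i \<otimes> x)" using Suc assms by simp
    also have "\<dots> = c [^] Suc i \<otimes> x" using assms by (metis m_assoc nat_pow_Suc2 nat_pow_closed)
    finally show ?case .
  qed (use assms in simp)
  have "permutation ?p"
    using left_translation_permutes[OF assms(2)] assms(1) permutation_permutes by blast
  then have "least_power ?p x dvd i \<longleftrightarrow> ord c dvd i" for i
    using assms by (simp add: least_power_dvd pow pow_eq_id)
  then show ?thesis by (meson dvd_antisym dvd_refl)
qed

lemma (in group) evenperm_left_translation:
  assumes "finite (carrier G)" "c \<in> carrier G"
  shows "evenperm (\<lambda>y. if y \<in> carrier G then c \<otimes> y else y)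
    \<longleftrightarrow> even (order G div ord c * (ord c - 1))"
proof -
  have "swapidseq_ext (carrier G) (order G div ord c * (ord c - 1))
      (\<lambda>y. if y \<in> carrier G then c \<otimes> y else y)"
    unfolding order_def
    by (rule swapidseq_ext_if_uniform_orbits[OF left_translation_permutes])
      (use assms least_power_left_translation in auto)
  then show ?thesis
    using evenperm_unique swapidseq_ext_imp_swapidseq by blast
qed

lemma odd_div_mult_pred_iff:
  fixes n m :: nat
  assumes "m dvd n" "n > 0"
  shows "odd (n div m * (m - 1)) \<longleftrightarrow> even n \<and> \<not> m dvd n div 2"
proof -
  obtain q where n: "n = m * q" using assms(1) by blast
  have pos: "m > 0" "q > 0" using n assms(2) by auto
  show ?thesis
  proof (cases "even q")
    case True
    then have "n div 2 = m * (q div 2)" using n by (metis div_mult_swap)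
    then show ?thesis using True n pos by auto
  next
    case False
    have "\<not> m dvd n div 2" if m_even: "even m"
    proof
      assume dvd: "m dvd n div 2"
      obtain k where k: "m = 2 * k" using m_even by blast
      then have "2 * k dvd q * k" using dvd n by (simp add: mult.commute)
      then show False using False k pos by (simp add: dvd_mult_cancel2)
    qed
    then show ?thesis using False n pos by auto
  qed
qed

lemma (in group) sign_left_translation:
  assumes "finite (carrier G)" "c \<in> carrier G"
  shows "sign (\<lambda>y. if y \<in> carrier G then c \<otimes> y else y)
    = (if even (order G) \<and> c [^] (order G div 2) \<noteq> \<one> then -1 else 1)"
proof -
  have "odd (order G div ord c * (ord c - 1)) \<longleftrightarrow> even (order G) \<and> \<not> ord c dvd order G div 2"
    using assms by (intro odd_div_mult_pred_iff ord_dvd_group_order) (auto simp: order_gt_0_iff_finite)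
  then have "evenperm (\<lambda>y. if y \<in> carrier G then c \<otimes> y else y)
      \<longleftrightarrow> \<not> (even (order G) \<and> \<not> ord c dvd order G div 2)"
    using evenperm_left_translation[OF assms] by blast
  then show ?thesis
    using assms(2) by (simp add: sign_def pow_eq_id)
qed

lemma two_pow_multiplicity_dvd_if_not_dvd_half:
  fixes n m :: nat
  assumes "n > 0" "m dvd n" "\<not> m dvd n div 2"
  shows "2 ^ multiplicity 2 n dvd m"
proof -
  obtain q where n: "n = m * q" using assms(2) by blast
  have "odd q"
  proof
    assume "even q"
    then have "n div 2 = m * (q div 2)" using n by (metis div_mult_swap)
    then show False using assms(3) by simp
  qed
  have "m \<noteq> 0" "q \<noteq> 0" using n assms(1) by auto
  then have "multiplicity 2 n = multiplicity 2 m + multiplicity (2::nat) q"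
    using n by (simp add: prime_elem_multiplicity_mult_distrib)
  also have "multiplicity (2::nat) q = 0" using \<open>odd q\<close> by (simp add: not_dvd_imp_multiplicity_0)
  finally show ?thesis by (simp add: multiplicity_dvd)
qed

lemma (in group) exists_ord_eq_two_part_of_order:
  assumes "finite (carrier G)" "a \<in> carrier G" "a [^] (order G div 2) \<noteq> \<one>"
  shows "\<exists>b\<in>carrier G. ord b = 2 ^ multiplicity 2 (order G)"
proof -
  have "0 < order G" using assms(1) by (simp add: order_gt_0_iff_finite)
  then have "2 ^ multiplicity 2 (order G) dvd ord a"
    using assms by (intro two_pow_multiplicity_dvd_if_not_dvd_half ord_dvd_group_order) (auto simp: pow_eq_id)
  then obtain k where k: "ord a = 2 ^ multiplicity 2 (order G) * k" by blast
  have "k \<noteq> 0" using k ord_ge_1[OF assms(1,2)] by auto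
  then have "ord (a [^] k) = 2 ^ multiplicity 2 (order G)"
    using ord_pow[OF assms(2)] k by simp
  then show ?thesis using assms(2) by blast
qed

lemma (in group) pow_half_order_eq_one_if_sylow2_not_cyclic:
  assumes "finite (carrier G)" "even (order G)" "a \<in> carrier G"
    and "\<forall>P. sylow2 G P \<longrightarrow> P = {\<one>} \<or> \<not> cyclic_subgroup G P"
  shows "a [^] (order G div 2) = \<one>"
proof (rule ccontr)
  assume "a [^] (order G div 2) \<noteq> \<one>"
  then obtain b where b: "b \<in> carrier G" "ord b = 2 ^ multiplicity 2 (order G)"
    using exists_ord_eq_two_part_of_order assms(1,3) by blast
  define P where "P = generate G {b}"
  have card: "card P = 2 ^ multiplicity 2 (order G)"
    unfolding P_def using generate_pow_card[OF b(1)] b(2) by simp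
  have "sylow2 G P" "cyclic_subgroup G P"
    unfolding sylow2_def cyclic_subgroup_def P_def
    using b generate_is_subgroup card generate.incl[of b "{b}" G] P_def by auto
  then have "P = {\<one>}" using assms(4) by blast
  then have "(2::nat) ^ multiplicity 2 (order G) = 1" using card by simp
  then have "multiplicity 2 (order G) = 0" by (simp add: nat_power_eq_Suc_0_iff)
  moreover have "multiplicity 2 (order G) > 0"
    using assms(1,2) by (simp add: multiplicity_gt_zero_iff order_gt_0_iff_finite)
  ultimately show False by simp
qed

lemma pow_card_eq_one_if_mult_closed:
  fixes H :: "'k::field set"
  assumes "finite H" "0 \<notin> H" "\<And>x y. x \<in> H \<Longrightarrow> y \<in> H \<Longrightarrow> x * y \<in> H" "h \<in> H"
  shows "h ^ card H = 1"
proof -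
  have "h \<noteq> 0" using assms(2,4) by auto
  then have inj: "inj_on ((*) h) H" by (auto simp: inj_on_def)
  have "(*) h ` H = H"
    using assms(1,3,4) card_image[OF inj] by (intro card_subset_eq) auto
  then have "\<Prod>H = (\<Prod>g\<in>H. h * g)"
    using prod.reindex[OF inj, of "\<lambda>x. x"] by simp
  also have "\<dots> = h ^ card H * \<Prod>H"
    by (simp add: prod.distrib)
  finally show ?thesis
    using assms(1,2) by (simp add: prod_zero_iff)
qed

lemma card_le_if_roots_of_unity:
  fixes A :: "'k::idom set"
  assumes "n > 0" "\<And>x. x \<in> A \<Longrightarrow> x ^ n = 1"
  shows "card A \<le> n"
proof -
  define p :: "'k poly" where "p = Polynomial.monom 1 n - 1"
  have "Polynomial.coeff p n = 1" using assms(1) by (simp add: p_def coeff_monom)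
  then have "p \<noteq> 0" by auto
  have "A \<subseteq> {x. poly p x = 0}"
    using assms(2) by (auto simp: p_def poly_monom)
  then have "card A \<le> card {x. poly p x = 0}"
    using poly_roots_finite[OF \<open>p \<noteq> 0\<close>] by (rule card_mono[rotated])
  also have "\<dots> \<le> Polynomial.degree p"
    using card_poly_roots_bound[OF \<open>p \<noteq> 0\<close>] .
  also have "\<dots> \<le> n"
    unfolding p_def using degree_diff_le_max[of "Polynomial.monom (1::'k) n" 1]
    by (simp add: degree_monom_eq)
  finally show ?thesis .
qed

lemma prod_roots_of_unity:
  fixes H :: "'k::field set"
  assumes "finite H" "H \<noteq> {}" "\<And>h. h \<in> H \<Longrightarrow> h ^ card H = 1"
  shows "\<Prod>H = (-1) ^ (card H + 1)"
proof -
  define d where "d = card H"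
  have "d > 0" using assms(1,2) d_def by (simp add: card_gt_0_iff)
  have "Polynomial.monom 1 d - 1 = (\<Prod>h\<in>H. [:-h, 1:])"
  proof (rule poly_eqI_degree_lead_coeff[where A = H and n = d])
    have "Polynomial.degree (\<Prod>h\<in>H. [:- h, 1:]) = d"
      using assms(1) d_def by (simp add: degree_prod_eq_sum_degree)
    moreover have "Polynomial.lead_coeff (\<Prod>h\<in>H. [:- h, 1:]) = 1"
      by (simp add: lead_coeff_prod)
    ultimately show "Polynomial.coeff (Polynomial.monom 1 d - 1) d
        = Polynomial.coeff (\<Prod>h\<in>H. [:- h, 1:]) d"
      using \<open>d > 0\<close> by (simp add: coeff_monom)
    show "Polynomial.degree (\<Prod>h\<in>H. [:- h, 1:]) \<le> d"
      using \<open>Polynomial.degree (\<Prod>h\<in>H. [:- h, 1:]) = d\<close> by simp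
    show "Polynomial.degree (Polynomial.monom (1::'k) d - 1) \<le> d"
      using degree_diff_le_max[of "Polynomial.monom (1::'k) d" 1] by (simp add: degree_monom_eq)
    show "poly (Polynomial.monom 1 d - 1) z = poly (\<Prod>h\<in>H. [:- h, 1:]) z" if "z \<in> H" for z
      using assms that d_def by (simp add: poly_monom poly_prod)
  qed (simp add: d_def)
  from arg_cong[where f = "\<lambda>p. poly p 0", OF this]
  have "-1 = (\<Prod>h\<in>H. - h)" using \<open>d > 0\<close> by (simp add: poly_monom poly_prod power_0_left)
  also have "\<dots> = (\<Prod>h\<in>H. (-1) * h)" by simp
  also have "\<dots> = (-1) ^ d * \<Prod>H" by (subst prod.distrib) (simp add: d_def)
  finally have "(-1) ^ d * (-1) = (-1) ^ d * ((-1) ^ d * \<Prod>H)" by simp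
  then show ?thesis
    by (simp add: d_def flip: mult.assoc power_add mult_2)
qed

lemma character_mult:
  "character G f \<Longrightarrow> x \<in> carrier G \<Longrightarrow> y \<in> carrier G \<Longrightarrow> f (x \<otimes>\<^bsub>G\<^esub> y) = f x * f y"
  unfolding character_def by blast

lemma character_nonzero: "character G f \<Longrightarrow> x \<in> carrier G \<Longrightarrow> f x \<noteq> 0"
  unfolding character_def by blast

lemma (in group) character_one:
  assumes "character G f"
  shows "f \<one> = 1"
proof -
  have "f \<one> * 1 = f \<one> * f \<one>"
    using character_mult[OF assms, of \<one> \<one>] by simp
  then show ?thesis using character_nonzero[OF assms one_closed] by (metis mult_left_cancel)
qed

lemma (in group) character_pow:
  assumes "character G f" "x \<in> carrier G"
  shows "f (x [^] (k::nat)) = f x ^ k"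
proof (induction k)
  case (Suc k)
  then show ?case using assms by (simp add: character_mult mult.commute)
qed (simp add: character_one[OF assms(1)])

lemma (in group) character_inv:
  assumes "character G f" "x \<in> carrier G"
  shows "f (inv x) * f x = 1"
  using assms by (simp flip: character_mult add: character_one)

lemma (in group) card_character_fibre:
  assumes "character G f" "a \<in> carrier G"
  shows "card {x \<in> carrier G. f x = f a} = card {x \<in> carrier G. f x = 1}"
proof -
  have "bij_betw (\<lambda>x. a \<otimes> x) {x \<in> carrier G. f x = 1} {x \<in> carrier G. f x = f a}"
  proof (rule bij_betwI[where g = "\<lambda>y. inv a \<otimes> y"])
    show "(\<lambda>y. inv a \<otimes> y) \<in> {x \<in> carrier G. f x = f a} \<rightarrow> {x \<in> carrier G. f x = 1}"
      using assms character_inv by (auto simp: character_mult)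
    show "(\<lambda>x. a \<otimes> x) \<in> {x \<in> carrier G. f x = 1} \<rightarrow> {x \<in> carrier G. f x = f a}"
      using assms by (auto simp: character_mult)
  qed (use assms in \<open>auto simp: m_assoc [symmetric]\<close>)
  then show ?thesis by (simp add: bij_betw_same_card)
qed

lemma (in group) order_eq_card_character_image_mult:
  assumes "finite (carrier G)" "character G f"
  shows "order G = card (f ` carrier G) * card {x \<in> carrier G. f x = 1}"
proof -
  have "order G = (\<Sum>x\<in>carrier G. 1)"
    unfolding order_def by simp
  also have "\<dots> = (\<Sum>y\<in>f ` carrier G. card {x \<in> carrier G. f x = y})"
    using assms(1) by (subst sum.image_gen[of _ _ f]) simp_all
  also have "\<dots> = (\<Sum>y\<in>f ` carrier G. card {x \<in> carrier G. f x = 1})"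
    using card_character_fibre[OF assms(2)] by (intro sum.cong) auto
  finally show ?thesis by simp
qed

lemma (in group) prod_character_eq_prod_image_power:
  assumes "finite (carrier G)" "character G f"
  shows "(\<Prod>x\<in>carrier G. f x) = (\<Prod>(f ` carrier G)) ^ card {x \<in> carrier G. f x = 1}"
proof -
  have "(\<Prod>x\<in>carrier G. f x) = (\<Prod>y\<in>f ` carrier G. \<Prod>x\<in>{x \<in> carrier G. f x = y}. f x)"
    using assms(1) by (rule prod.image_gen)
  also have "\<dots> = (\<Prod>y\<in>f ` carrier G. y ^ card {x \<in> carrier G. f x = 1})"
    using card_character_fibre[OF assms(2)] by (intro prod.cong) auto
  finally show ?thesis by (simp add: prod_power_distrib)
qed

lemma (in group) character_pow_card_image:
  assumes "finite (carrier G)" "character G f" "x \<in> carrier G"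
  shows "f x ^ card (f ` carrier G) = 1"
proof (rule pow_card_eq_one_if_mult_closed)
  show "0 \<notin> f ` carrier G" using character_nonzero[OF assms(2)] by auto
  show "y * z \<in> f ` carrier G" if yz: "y \<in> f ` carrier G" "z \<in> f ` carrier G" for y z
  proof -
    obtain a b where ab: "a \<in> carrier G" "b \<in> carrier G" "y = f a" "z = f b"
      using yz by blast
    then have "y * z = f (a \<otimes> b)" by (simp add: character_mult[OF assms(2)])
    then show ?thesis using ab(1,2) by (simp add: rev_image_eqI)
  qed
qed (use assms in auto)

lemma (in group) prod_character_eq_neg_one_power:
  assumes "finite (carrier G)" "character G f"
  shows "(\<Prod>x\<in>carrier G. f x)
    = (-1) ^ ((card (f ` carrier G) + 1) * card {x \<in> carrier G. f x = 1})"
proof -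
  have "\<Prod>(f ` carrier G) = (-1) ^ (card (f ` carrier G) + 1)"
    using assms character_pow_card_image by (intro prod_roots_of_unity) auto
  then show ?thesis
    using prod_character_eq_prod_image_power[OF assms] by (simp only: power_mult)
qed

lemma (in group) prod_character_eq_one:
  fixes f :: "'a \<Rightarrow> 'k::field"
  assumes fin: "finite (carrier G)" and f: "character G f"
    and half: "\<And>a. even (order G) \<Longrightarrow> a \<in> carrier G \<Longrightarrow> a [^] (order G div 2) = \<one>"
  shows "(\<Prod>x\<in>carrier G. f x) = 1"
proof (rule ccontr)
  define d where "d = card (f ` carrier G)"
  define m where "m = card {x \<in> carrier G. f x = 1}"
  assume "(\<Prod>x\<in>carrier G. f x) \<noteq> 1"
  then have "odd ((d + 1) * m)"
    using prod_character_eq_neg_one_power[OF fin f] unfolding d_def m_def by auto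
  then have "even d" "odd m" by auto
  then obtain d' m' where d': "d = 2 * d'" and m': "m = 2 * m' + 1"
    by (blast elim: evenE oddE)
  have "d > 0" using fin d_def by (auto simp: card_gt_0_iff)
  then have "\<not> (\<forall>x\<in>carrier G. f x ^ d' = 1)"
    using card_le_if_roots_of_unity[of d' "f ` carrier G"] d' unfolding d_def by auto
  then obtain a where a: "a \<in> carrier G" "f a ^ d' \<noteq> 1" by blast
  have "order G = d * m"
    using order_eq_card_character_image_mult[OF fin f] unfolding d_def m_def .
  then have n: "order G = 2 * (d * m' + d')" using d' m' by (simp add: algebra_simps)
  have "f (a [^] (order G div 2)) = (f a ^ d) ^ m' * f a ^ d'"
    unfolding n using character_pow[OF f a(1)] by (simp add: power_add power_mult)
  also have "\<dots> = f a ^ d'"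
    using character_pow_card_image[OF fin f a(1)] unfolding d_def by simp
  finally show False
    using half[of a] n a character_one[OF f] by simp
qed

lemma det_perm_op:
  fixes G :: "('a::finite, 'm) monoid_scheme" (structure)
  assumes "group G" "carrier G = UNIV" "a \<in> carrier G"
  shows "det (perm_op G a :: 'k::comm_ring_1 ^ 'a ^ 'a)
    = of_int (sign (\<lambda>y. if y \<in> carrier G then inv a \<otimes> y else y))"
proof -
  interpret group G by fact
  let ?p = "\<lambda>y. if y \<in> carrier G then inv a \<otimes> y else y"
  have "?p permutes UNIV"
    using left_translation_permutes[of "inv a"] assms by simp
  moreover have "perm_op G a = (\<chi> i. (mat 1 :: 'k ^ 'a ^ 'a) $ ?p i)"
    using assms by (auto simp: perm_op_def mat_def vec_eq_iff m_assoc [symmetric])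
  ultimately show ?thesis
    using det_permute_rows[of ?p "mat 1 :: 'k ^ 'a ^ 'a"] by simp
qed

lemma det_diag_op: "det (diag_op c) = (\<Prod>i\<in>UNIV. c i)"
  by (subst det_diagonal) (auto simp: diag_op_def)

theorem lemma8p9:
  fixes G :: "('a::finite) monoid"
  assumes "alg_closed TYPE('k::field_char_0)"
    and "comm_group G"
    and "carrier G = UNIV"
    and "\<forall>P. sylow2 G P \<longrightarrow> P = {\<one>\<^bsub>G\<^esub>} \<or> \<not> cyclic_subgroup G P"
  shows "(\<forall>a\<in>carrier G. det (perm_op G a :: 'k ^ 'a ^ 'a) = 1)
    \<and> (\<forall>c :: 'a \<Rightarrow> 'k. character G c \<longrightarrow> det (diag_op c) = 1)"
proof -
  interpret group G using assms(2) by (rule comm_group.axioms(2))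
  have fin: "finite (carrier G)" using assms(3) by simp
  have half: "a [^]\<^bsub>G\<^esub> (order G div 2) = \<one>\<^bsub>G\<^esub>" if "even (order G)" "a \<in> carrier G" for a
    using pow_half_order_eq_one_if_sylow2_not_cyclic[OF fin that assms(4)] .
  have "det (perm_op G a :: 'k ^ 'a ^ 'a) = 1" if "a \<in> carrier G" for a
    using det_perm_op[OF group_axioms assms(3) that] sign_left_translation[OF fin inv_closed[OF that]]
      half[OF _ inv_closed[OF that]] by (cases "even (order G)") simp_all
  moreover have "det (diag_op c) = 1" if "character G c" for c :: "'a \<Rightarrow> 'k"
    using prod_character_eq_one[OF fin that half] assms(3) by (simp add: det_diag_op)
  ultimately show ?thesis by blast
qed

end
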